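(* Let $N\ge 1$ be an integer and $h,g>0$ real numbers. For $k\in\{0,1,\dots,N\}$ and $\Delta>0$ define $$R_k(\Delta):=\log\Big(1+(N-k)\frac{h^2}{1+\Delta}\Big)+\log(1+kg^2)-k\log\Big(\frac{1+\Delta}{\Delta}\Big)$$ (logarithms base $2$). For $i\in\{0,\dots,N-1\}$ let $\Delta^*_{(i)(i+1)}$ be the unique positive solution of $R_i(\Delta)=R_{i+1}(\Delta)$. Then $\Delta^*_{(i)(i+1)}$ is non-decreasing in $i$, i.e. $\Delta^*_{01}\le\Delta^*_{12}\le\cdots\le\Delta^*_{(N-1)(N)}$.
   Context: $R_k(\Delta)$ is the quantize-map-and-forward rate of a cut containing $k$ relays in the symmetric $N$-relay diamond network (all source-relay magnitudes equal $h$, all relay-destination magnitudes equal $g$) when every relay uses Gaussian quantization distortion $\Delta$. The equation $R_i(\Delta)=R_{i+1}(\Delta)$ has exactly one positive solution for each $i$. *)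

theory Defs
  imports Complex_Main
begin

text \<open>QMF rate of a cut with k relays in the symmetric N-relay diamond network,
  with Gaussian quantization distortion D (logarithms base 2).\<close>
definition qmf_rate :: "nat \<Rightarrow> real \<Rightarrow> real \<Rightarrow> nat \<Rightarrow> real \<Rightarrow> real" where
  "qmf_rate N h g k D =
     log 2 (1 + (real N - real k) * (h^2 / (1 + D))) + log 2 (1 + real k * g^2)
     - real k * log 2 ((1 + D) / D)"

definition qmf_cross :: "nat \<Rightarrow> real \<Rightarrow> real \<Rightarrow> nat \<Rightarrow> real" where
  "qmf_cross N h g i = (THE D. D > 0 \<and> qmf_rate N h g i D = qmf_rate N h g (Suc i) D)"

end

theory Submission
  imports Defs
begin

text \<open>With m = N - i relays on the source side, exponentiating R_i - R_(i+1) gives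
  F(m,\<Delta>) / c_i, where F(m,\<Delta>) = (1 + h^2/(1 + \<Delta> + (m-1)h^2))(1 + 1/\<Delta>) (source_ratio)
  and c_i = 1 + g^2/(1 + i g^2) (relay_ratio). F decreases strictly from \<infinity> to 1 in \<Delta> and does not
  increase in m, while c_i > 1 decreases in i. Hence the crossing \<Delta>_i is the unique
  solution of F(N-i,\<Delta>) = c_i, and for i \<le> j
  F(N-j,\<Delta>_i) \<ge> F(N-i,\<Delta>_i) = c_i \<ge> c_j = F(N-j,\<Delta>_j), which forces \<Delta>_i \<le> \<Delta>_j.\<close>

definition source_ratio :: "real \<Rightarrow> real \<Rightarrow> real \<Rightarrow> real" where
  "source_ratio h m D = (1 + h^2 / (1 + D + (m - 1) * h^2)) * (1 + 1 / D)"

definition relay_ratio :: "real \<Rightarrow> nat \<Rightarrow> real" where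
  "relay_ratio g i = 1 + g^2 / (1 + real i * g^2)"

lemma source_denom_pos:
  fixes m h D :: real
  assumes "m \<ge> 1" "D > 0"
  shows "1 + D + (m - 1) * h^2 > 0"
proof -
  have "(m - 1) * h^2 \<ge> 0" using assms by simp
  then show ?thesis using assms by linarith
qed

lemma source_ratio_pos:
  assumes "m \<ge> 1" "D > 0"
  shows "source_ratio h m D > 0"
  using source_denom_pos[OF assms, of h] assms(2)
  unfolding source_ratio_def by (intro mult_pos_pos add_pos_nonneg) auto

lemma relay_ratio_gt_1: "g \<noteq> 0 \<Longrightarrow> relay_ratio g i > 1"
  unfolding relay_ratio_def by (simp add: add_pos_nonneg)

lemma qmf_rate_diff:
  assumes D: "D > 0" and i: "i < N"
  shows "qmf_rate N h g i D - qmf_rate N h g (Suc i) D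
           = log 2 (source_ratio h (real N - real i) D) - log 2 (relay_ratio g i)"
proof -
  define m where "m = real N - real i"
  have m: "m \<ge> 1" using i by (simp add: m_def)
  have q: "1 + D + (m - 1) * h^2 > 0" using source_denom_pos[OF m D] .
  have "m * h^2 = (m - 1) * h^2 + h^2" by (simp add: algebra_simps)
  then have s: "1 + D + m * h^2 > 0" using q zero_le_power2[of h] by linarith
  have ci: "1 + real i * g^2 > 0" by (simp add: add_pos_nonneg)
  have cs: "1 + real (Suc i) * g^2 > 0" by (simp add: add_pos_nonneg)
  have src: "1 + m * (h^2 / (1 + D)) = (1 + D + m * h^2) / (1 + D)"
    and src': "1 + (m - 1) * (h^2 / (1 + D)) = (1 + D + (m - 1) * h^2) / (1 + D)"
    using D by (simp_all add: field_simps)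
  have ratio: "source_ratio h m D = (1 + D + m * h^2) / (1 + D + (m - 1) * h^2) * ((1 + D) / D)"
    unfolding source_ratio_def using q D by (simp add: field_simps)
  have relay: "relay_ratio g i = (1 + real (Suc i) * g^2) / (1 + real i * g^2)"
    unfolding relay_ratio_def using ci by (simp add: field_simps)
  have shift: "real N - real (Suc i) = m - 1" by (simp add: m_def)
  show ?thesis
    unfolding qmf_rate_def m_def[symmetric] shift src src' ratio relay
    using D q s ci cs by (simp add: log_divide log_mult) (simp add: algebra_simps)
qed

lemma qmf_rate_eq_Suc_iff:
  assumes "D > 0" and "i < N" and "g \<noteq> 0"
  shows "qmf_rate N h g i D = qmf_rate N h g (Suc i) D
           \<longleftrightarrow> source_ratio h (real N - real i) D = relay_ratio g i"
proof -
  have "source_ratio h (real N - real i) D > 0" using assms by (intro source_ratio_pos) auto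
  moreover have "relay_ratio g i > 0" using relay_ratio_gt_1[OF assms(3), of i] by simp
  ultimately have "log 2 (source_ratio h (real N - real i) D) = log 2 (relay_ratio g i)
      \<longleftrightarrow> source_ratio h (real N - real i) D = relay_ratio g i"
    by (simp add: inj_on_eq_iff[OF log_inj])
  with qmf_rate_diff[OF assms(1,2), of h g] show ?thesis by linarith
qed

lemma source_ratio_strict_antimono:
  assumes m: "m \<ge> 1" and D: "0 < D" and DE: "D < E"
  shows "source_ratio h m E < source_ratio h m D"
proof -
  have E: "E > 0" using D DE by simp
  have qD: "1 + D + (m - 1) * h^2 > 0" using source_denom_pos[OF m D] .
  have qE: "1 + E + (m - 1) * h^2 > 0" using source_denom_pos[OF m E] .
  have a: "h^2 / (1 + E + (m - 1) * h^2) \<le> h^2 / (1 + D + (m - 1) * h^2)"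
    using qD DE by (intro divide_left_mono) auto
  have b: "1 / E < 1 / D" using D DE by (simp add: divide_strict_left_mono)
  have "source_ratio h m E \<le> (1 + h^2 / (1 + D + (m - 1) * h^2)) * (1 + 1 / E)"
    unfolding source_ratio_def using a E by (intro mult_right_mono) auto
  also have "\<dots> < source_ratio h m D"
    unfolding source_ratio_def using b qD by (intro mult_strict_left_mono add_pos_nonneg) auto
  finally show ?thesis .
qed

lemma source_ratio_antimono_size:
  assumes "1 \<le> m'" "m' \<le> m" "D > 0"
  shows "source_ratio h m D \<le> source_ratio h m' D"
proof -
  have "(m' - 1) * h^2 \<le> (m - 1) * h^2" using assms by (intro mult_right_mono) auto
  then have "h^2 / (1 + D + (m - 1) * h^2) \<le> h^2 / (1 + D + (m' - 1) * h^2)"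
    using source_denom_pos[OF assms(1,3), of h] by (intro divide_left_mono) auto
  then show ?thesis unfolding source_ratio_def using assms(3) by (intro mult_right_mono) auto
qed

lemma source_ratio_lower:
  assumes "m \<ge> 1" "D > 0"
  shows "1 + 1 / D \<le> source_ratio h m D"
proof -
  have "0 \<le> h^2 / (1 + D + (m - 1) * h^2) * (1 + 1 / D)"
    using source_denom_pos[OF assms, of h] assms(2) by (intro mult_nonneg_nonneg) auto
  then show ?thesis unfolding source_ratio_def by (simp add: algebra_simps)
qed

lemma source_ratio_upper:
  assumes "m \<ge> 1" "D > 0"
  shows "source_ratio h m D \<le> (1 + h^2 / D) * (1 + 1 / D)"
proof -
  have "D \<le> 1 + D + (m - 1) * h^2" using assms by simp
  then have "h^2 / (1 + D + (m - 1) * h^2) \<le> h^2 / D"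
    using assms(2) by (intro divide_left_mono) auto
  then show ?thesis unfolding source_ratio_def using assms(2) by (intro mult_right_mono) auto
qed

lemma isCont_source_ratio:
  assumes "m \<ge> 1" "D > 0"
  shows "isCont (source_ratio h m) D"
  unfolding source_ratio_def[abs_def] using source_denom_pos[OF assms, of h] assms(2)
  by (intro continuous_intros) auto

lemma source_ratio_surj:
  assumes m: "m \<ge> 1" and c: "c > 1"
  shows "\<exists>D>0. source_ratio h m D = c"
proof -
  define D0 where "D0 = 1 / c"
  define D1 where "D1 = (2 * h^2 + 1) / (c - 1) + 1"
  have D0: "D0 > 0" using c by (simp add: D0_def)
  have D1: "D1 \<ge> 1" using c by (simp add: D1_def)
  have "c \<le> source_ratio h m D0"
    using source_ratio_lower[OF m D0, of h] c by (simp add: D0_def)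
  moreover have "source_ratio h m D1 \<le> c"
  proof -
    have "(2 * h^2 + 1) / (c - 1) \<le> D1" by (simp add: D1_def)
    then have "2 * h^2 + 1 \<le> (c - 1) * D1" using c by (simp add: pos_divide_le_eq mult.commute)
    then have "(2 * h^2 + 1) / D1 \<le> c - 1" using D1 by (simp add: pos_divide_le_eq)
    moreover have "h^2 / D1 * (1 / D1) \<le> h^2 / D1"
      using D1 by (intro mult_left_le) auto
    ultimately have "(1 + h^2 / D1) * (1 + 1 / D1) \<le> c"
      by (simp add: algebra_simps add_divide_distrib)
    then show ?thesis using source_ratio_upper[OF m, of D1 h] D1 by simp
  qed
  moreover have "D0 \<le> D1"
    using source_ratio_strict_antimono[OF m, of D1 D0 h] calculation D1 by fastforce
  ultimately obtain D where "D0 \<le> D" "source_ratio h m D = c"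
    using IVT2[of "source_ratio h m" D1 c D0] D0 isCont_source_ratio[OF m] by fastforce
  with D0 show ?thesis by (intro exI[of _ D]) auto
qed

lemma relay_ratio_antimono:
  assumes "i \<le> j"
  shows "relay_ratio g j \<le> relay_ratio g i"
proof -
  have "1 + real i * g^2 \<le> 1 + real j * g^2" using assms by (simp add: mult_right_mono)
  then show ?thesis unfolding relay_ratio_def
    by (intro add_left_mono divide_left_mono) (auto simp: add_pos_nonneg)
qed

lemma qmf_rate_crossing_unique:
  assumes "i < N" and "g \<noteq> 0"
  shows "\<exists>!D. D > 0 \<and> qmf_rate N h g i D = qmf_rate N h g (Suc i) D"
proof -
  have m: "real N - real i \<ge> 1" using assms(1) by simp
  obtain D where D: "D > 0" "source_ratio h (real N - real i) D = relay_ratio g i"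
    using source_ratio_surj[OF m relay_ratio_gt_1[OF assms(2)]] by blast
  show ?thesis
  proof (rule ex1I[of _ D])
    show "D > 0 \<and> qmf_rate N h g i D = qmf_rate N h g (Suc i) D"
      using D qmf_rate_eq_Suc_iff[OF D(1) assms] by simp
  next
    fix E assume "E > 0 \<and> qmf_rate N h g i E = qmf_rate N h g (Suc i) E"
    then have E: "E > 0" "source_ratio h (real N - real i) E = relay_ratio g i"
      using qmf_rate_eq_Suc_iff[OF _ assms] by auto
    show "E = D"
      using source_ratio_strict_antimono[OF m, of D E h] source_ratio_strict_antimono[OF m, of E D h]
        D E by (cases E D rule: linorder_cases) auto
  qed
qed

lemma qmf_cross_solves:
  assumes "i < N" and "g \<noteq> 0"
  shows "qmf_cross N h g i > 0"
    and "source_ratio h (real N - real i) (qmf_cross N h g i) = relay_ratio g i"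
proof -
  have "qmf_cross N h g i > 0 \<and>
      qmf_rate N h g i (qmf_cross N h g i) = qmf_rate N h g (Suc i) (qmf_cross N h g i)"
    unfolding qmf_cross_def by (rule theI'[OF qmf_rate_crossing_unique[OF assms]])
  then show "qmf_cross N h g i > 0"
    and "source_ratio h (real N - real i) (qmf_cross N h g i) = relay_ratio g i"
    using qmf_rate_eq_Suc_iff[OF _ assms] by auto
qed

theorem lemma4:
  fixes N :: nat and h g :: real
  assumes "N \<ge> 1" and "h > 0" and "g > 0"
  shows "mono_on {..<N} (qmf_cross N h g)"
proof (rule mono_onI)
  fix i j assume i: "i \<in> {..<N}" and j: "j \<in> {..<N}" and ij: "i \<le> j"
  have g: "g \<noteq> 0" using assms(3) by simp
  have mj: "real N - real j \<ge> 1" using j by auto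
  let ?Di = "qmf_cross N h g i" and ?Dj = "qmf_cross N h g j"
  have "source_ratio h (real N - real j) ?Dj = relay_ratio g j"
    using qmf_cross_solves(2) j g by auto
  also have "\<dots> \<le> relay_ratio g i" using relay_ratio_antimono[OF ij] .
  also have "\<dots> = source_ratio h (real N - real i) ?Di"
    using qmf_cross_solves(2) i g by auto
  also have "\<dots> \<le> source_ratio h (real N - real j) ?Di"
    using source_ratio_antimono_size[OF mj] qmf_cross_solves(1) i g ij by auto
  finally have "source_ratio h (real N - real j) ?Dj \<le> source_ratio h (real N - real j) ?Di" .
  moreover have "?Dj > 0" using qmf_cross_solves(1) j g by auto
  ultimately show "?Di \<le> ?Dj"
    using source_ratio_strict_antimono[OF mj, of ?Dj ?Di h] by (meson not_le)
qed

end
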